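(* Let $n=2^r$, $m\ge1$, and consider the variables $P_{i,j}$ ($i\in[m]$, $j\in[r]$) of the binary $\mathrm{PHP}^m_n$. Let $\mathcal R'$ be the random restriction which, for each pigeon $i$ independently, selects a bit position $j\in[r]$ uniformly at random and sets $P_{i,j}$ to $0$ or $1$ with probability $\frac12$ each. Then a term $T$ that mentions $n'$ pigeons does not evaluate to zero under $\mathcal R'$ (i.e. no literal of $T$ is set false) with probability at most $e^{-n'/(2\log_2 n)}$.
   Context: In the binary Pigeonhole Principle, $P_{i,j}$ is the $j$th bit of the binary representation of the hole of pigeon $i$. A term is a conjunction of literals over the variables $P_{i,j}$; it mentions pigeon $i$ if it contains a literal of some variable $P_{i,j}$. *)

theory Defs
  imports "HOL-Probability.Product_PMF"
begin

text \<open>A variable of binary PHP is a pair (i, j): P_{i,j}, the j-th bit of the hole of pigeon i.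
  A literal is a pair (v, b) asserting that variable v has value b.
  A term is a set of literals (their conjunction).\<close>

type_synonym bphp_var = "nat \<times> nat"
type_synonym bphp_lit = "bphp_var \<times> bool"

definition pigeons_mentioned :: "bphp_lit set \<Rightarrow> nat set" where
  "pigeons_mentioned T = {i. \<exists>j b. ((i, j), b) \<in> T}"

text \<open>The restriction R': for each pigeon i, a pair (j, c): bit position j is set to c.
  Pigeons outside [m] are mapped to the default value and ignored.\<close>
definition restr_R' :: "nat \<Rightarrow> nat \<Rightarrow> (nat \<Rightarrow> nat \<times> bool) pmf" where
  "restr_R' m r = Pi_pmf {0..<m} (0, False) (\<lambda>_. pmf_of_set ({0..<r} \<times> UNIV))"

definition lit_falsified :: "(nat \<Rightarrow> nat \<times> bool) \<Rightarrow> bphp_lit \<Rightarrow> bool" where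
  "lit_falsified \<rho> l = (case l of ((i, j), b) \<Rightarrow> fst (\<rho> i) = j \<and> snd (\<rho> i) \<noteq> b)"

definition term_not_zero :: "(nat \<Rightarrow> nat \<times> bool) \<Rightarrow> bphp_lit set \<Rightarrow> bool" where
  "term_not_zero \<rho> T = (\<forall>l\<in>T. \<not> lit_falsified \<rho> l)"

end

theory Submission
  imports Defs
begin

text \<open>A term survives \<open>\<rho>\<close> iff every pigeon \<open>i\<close> avoids the choices \<open>(j, \<not> b)\<close> with
  \<open>((i, j), b) \<in> T\<close>. Pigeons choose independently and uniformly among \<open>2 r\<close> pairs, and each
  mentioned pigeon has at least one fatal choice, so the survival probability is at most
  \<open>(1 - 1 / (2 r)) ^ n' \<le> exp (- n' / (2 r))\<close>, where \<open>r = log\<^sub>2 n\<close>.\<close>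

definition falsifying_choices :: "bphp_lit set \<Rightarrow> nat \<Rightarrow> (nat \<times> bool) set" where
  "falsifying_choices T i = {(j, \<not> b) | j b. ((i, j), b) \<in> T}"

lemma lit_falsified_iff: "lit_falsified \<rho> ((i, j), b) \<longleftrightarrow> \<rho> i = (j, \<not> b)"
  unfolding lit_falsified_def by (cases "\<rho> i") auto

lemma term_not_zero_iff_avoids_falsifying_choices:
  "term_not_zero \<rho> T \<longleftrightarrow> (\<forall>i. \<rho> i \<notin> falsifying_choices T i)"
  unfolding term_not_zero_def falsifying_choices_def
  by (auto simp: lit_falsified_iff)

lemma measure_pmf_of_set_Compl_le:
  assumes "finite A" and "A \<noteq> {}" and "F \<inter> A \<noteq> {}"
  shows "measure_pmf.prob (pmf_of_set A) (- F) \<le> 1 - 1 / card A"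
proof -
  have "1 \<le> card (A \<inter> F)"
    using assms by (simp add: Int_commute Suc_le_eq card_gt_0_iff)
  then have "1 / card A \<le> measure_pmf.prob (pmf_of_set A) F"
    using assms by (simp add: measure_pmf_of_set divide_right_mono)
  moreover have "measure_pmf.prob (pmf_of_set A) (- F) = 1 - measure_pmf.prob (pmf_of_set A) F"
    using measure_pmf.prob_compl[of F "pmf_of_set A"] unfolding Compl_eq_Diff_UNIV by simp
  ultimately show ?thesis
    by linarith
qed

lemma prob_restr_R'_term_not_zero_le:
  assumes "r \<ge> 1" and "\<forall>((i, j), b) \<in> T. i < m \<and> j < r"
  shows "measure_pmf.prob (restr_R' m r) {\<rho>. term_not_zero \<rho> T}
           \<le> (1 - 1 / (2 * real r)) ^ card (pigeons_mentioned T)"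
proof -
  define S where "S = pigeons_mentioned T"
  define A where "A = {0..<r} \<times> (UNIV :: bool set)"
  define p where "p i = measure_pmf.prob (pmf_of_set A) (- falsifying_choices T i)" for i
  define q where "q = 1 - 1 / (2 * real r)"
  have A: "finite A" "A \<noteq> {}" "card A = 2 * r"
    using assms(1) by (auto simp: A_def card_cartesian_product)
  have S_sub: "S \<subseteq> {0..<m}"
    using assms(2) unfolding S_def pigeons_mentioned_def by fastforce
  have p_le_q: "p i \<le> q" if "i \<in> S" for i
  proof -
    obtain j b where "((i, j), b) \<in> T"
      using \<open>i \<in> S\<close> unfolding S_def pigeons_mentioned_def by blast
    with assms(2) have "(j, \<not> b) \<in> falsifying_choices T i \<inter> A"
      unfolding falsifying_choices_def A_def by fastforce
    then have "p i \<le> 1 - 1 / card A"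
      unfolding p_def by (intro measure_pmf_of_set_Compl_le A(1,2)) blast
    then show ?thesis
      using A(3) by (simp add: q_def)
  qed
  have p_bound: "0 \<le> p i \<and> p i \<le> (if i \<in> S then q else 1)" for i
  proof -
    have "0 \<le> p i" and "p i \<le> 1"
      unfolding p_def by (rule measure_nonneg, rule measure_pmf.prob_le_1)
    then show ?thesis
      using p_le_q[of i] by auto
  qed
  have "measure_pmf.prob (restr_R' m r) {\<rho>. term_not_zero \<rho> T}
      \<le> measure_pmf.prob (restr_R' m r) (Pi {0..<m} (\<lambda>i. - falsifying_choices T i))"
    by (intro measure_pmf.finite_measure_mono)
       (auto simp: term_not_zero_iff_avoids_falsifying_choices)
  also have "\<dots> = (\<Prod>i\<in>{0..<m}. p i)"
    unfolding restr_R'_def p_def A_def by (rule measure_Pi_pmf_Pi) simp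
  also have "\<dots> \<le> (\<Prod>i\<in>{0..<m}. if i \<in> S then q else 1)"
    by (rule prod_mono) (rule p_bound)
  also have "\<dots> = q ^ card S"
    using S_sub by (simp add: prod.If_cases Int_absorb1)
  finally show ?thesis
    unfolding S_def q_def .
qed

theorem lemma5:
  fixes n r m :: nat and T :: "bphp_lit set"
  assumes "n = 2 ^ r" and "r \<ge> 1" and "m \<ge> 1"
    and "\<forall>((i, j), b) \<in> T. i < m \<and> j < r"
  shows "measure_pmf.prob (restr_R' m r) {\<rho>. term_not_zero \<rho> T}
           \<le> exp (- real (card (pigeons_mentioned T)) / (2 * log 2 (real n)))"
proof -
  define k where "k = card (pigeons_mentioned T)"
  define x where "x = 1 / (2 * real r)"
  have "measure_pmf.prob (restr_R' m r) {\<rho>. term_not_zero \<rho> T} \<le> (1 - x) ^ k"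
    unfolding k_def x_def using prob_restr_R'_term_not_zero_le[OF assms(2,4)] .
  also have "\<dots> \<le> exp (- x) ^ k"
    using exp_ge_add_one_self[of "- x"] assms(2) by (intro power_mono) (simp_all add: x_def)
  also have "\<dots> = exp (- real k / (2 * log 2 (real n)))"
    using assms(1) by (simp add: x_def log_nat_power flip: exp_of_nat_mult)
  finally show ?thesis
    unfolding k_def .
qed

end
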